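(* Every ABC scoring rule satisfies group participation. That is, if $f$ is the ABC scoring rule induced by a scoring function $s$, then for every approval profile $A$, every committee size $k\in\{1,\dots,m-1\}$ and every group of voters $I\subsetneq N_A$, it is not the case that $f(A_{-I},k)\succsim_i f(A,k)$ for all $i\in I$ while $f(A_{-I},k)\succ_{i^*} f(A,k)$ for some $i^*\in I$.
   Context: Let $C$ be a finite set of $m>1$ candidates. An approval profile $A$ consists of a nonempty finite set of voters $N_A$ and, for each voter $i\in N_A$, a nonempty ballot $A_i\subseteq C$. For $I\subsetneq N_A$, $A_{-I}$ denotes the profile obtained by removing the voters in $I$ (electorate $N_A\setminus I$, ballots unchanged). For $k\in\{1,\dots,m-1\}$ let $\mathcal W_k$ be the set of $k$-element subsets (committees) of $C$. An ABC voting rule $f$ maps each profile $A$ and size $k$ to a nonempty set $f(A,k)\subseteq\mathcal W_k$. Preferences: voter $i$ weakly prefers committee $W$ to $W'$ ($W\succsim_i W'$) if $|W\cap A_i|\ge|W'\cap A_i|$, strictly ($W\succ_i W'$) if $|W\cap A_i|>|W'\cap A_i|$. For sets of committees $X,Y$ (Kelly's extension): $X\succsim_i Y$ iff $W\succsim_i W'$ for all $W\in X$, $W'\in Y$; $X\succ_i Y$ iff $X\succsim_i Y$ and there exist $W\in X$, $W'\in Y$ with $W\succ_i W'$. ABC scoring rules: a scoring function $s$ assigns to all integers $0\le x\le y$ a rational number $s(x,y)$ with $s(0,y)=0$ and $s(x,y)\ge s(x',y)$ whenever $x'\le x\le y$. The score of committee $W$ in $A$ is $\hat s(A,W)=\sum_{i\in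 N_A}s(|A_i\cap W|,|A_i|)$, and the induced rule returns all $W\in\mathcal W_k$ maximizing $\hat s(A,W)$. *)

theory Defs
  imports Complex_Main
begin

definition approval_profile :: "'c set \<Rightarrow> 'v set \<Rightarrow> ('v \<Rightarrow> 'c set) \<Rightarrow> bool" where
  "approval_profile C N A \<longleftrightarrow> finite N \<and> N \<noteq> {} \<and>
     (\<forall>i\<in>N. A i \<noteq> {} \<and> A i \<subseteq> C)"

definition committees :: "'c set \<Rightarrow> nat \<Rightarrow> 'c set set" where
  "committees C k = {W. W \<subseteq> C \<and> card W = k}"

definition scoring_function :: "(nat \<Rightarrow> nat \<Rightarrow> rat) \<Rightarrow> bool" where
  "scoring_function s \<longleftrightarrow> (\<forall>y. s 0 y = 0) \<and>
     (\<forall>x x' y. x' \<le> x \<and> x \<le> y \<longrightarrow> s x y \<ge> s x' y)"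

definition abc_score :: "(nat \<Rightarrow> nat \<Rightarrow> rat) \<Rightarrow> 'v set \<Rightarrow> ('v \<Rightarrow> 'c set) \<Rightarrow> 'c set \<Rightarrow> rat" where
  "abc_score s N A W = (\<Sum>i\<in>N. s (card (A i \<inter> W)) (card (A i)))"

definition scoring_rule :: "(nat \<Rightarrow> nat \<Rightarrow> rat) \<Rightarrow> 'c set \<Rightarrow> 'v set \<Rightarrow> ('v \<Rightarrow> 'c set) \<Rightarrow> nat \<Rightarrow> 'c set set" where
  "scoring_rule s C N A k = {W \<in> committees C k.
      \<forall>W' \<in> committees C k. abc_score s N A W' \<le> abc_score s N A W}"

definition weakly_prefers :: "'c set \<Rightarrow> 'c set \<Rightarrow> 'c set \<Rightarrow> bool" where
  "weakly_prefers Ai W W' \<longleftrightarrow> card (W \<inter> Ai) \<ge> card (W' \<inter> Ai)"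

definition strictly_prefers :: "'c set \<Rightarrow> 'c set \<Rightarrow> 'c set \<Rightarrow> bool" where
  "strictly_prefers Ai W W' \<longleftrightarrow> card (W \<inter> Ai) > card (W' \<inter> Ai)"

definition kelly_weak :: "'c set \<Rightarrow> 'c set set \<Rightarrow> 'c set set \<Rightarrow> bool" where
  "kelly_weak Ai X Y \<longleftrightarrow> (\<forall>W\<in>X. \<forall>W'\<in>Y. weakly_prefers Ai W W')"

definition kelly_strict :: "'c set \<Rightarrow> 'c set set \<Rightarrow> 'c set set \<Rightarrow> bool" where
  "kelly_strict Ai X Y \<longleftrightarrow> kelly_weak Ai X Y \<and> (\<exists>W\<in>X. \<exists>W'\<in>Y. strictly_prefers Ai W W')"

end

theory Submission
  imports Defs
begin

text \<open>Let \<open>W\<close> win after the group \<open>I\<close> abstains and \<open>W'\<close> win with \<open>I\<close> voting, every member of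
  \<open>I\<close> liking \<open>W\<close> at least as much as \<open>W'\<close>. By monotonicity of \<open>s\<close>, \<open>I\<close> gives \<open>W\<close> at least the
  score of \<open>W'\<close>, and the rest of the electorate does too, since \<open>W\<close> wins there. As \<open>W'\<close> wins
  overall, both inequalities are equalities, so \<open>W\<close> also wins overall and \<open>W'\<close> also wins without
  \<open>I\<close>. The Kelly comparison then forces every member of \<open>I\<close> to be indifferent between \<open>W\<close> and
  \<open>W'\<close>, so no member can strictly gain.\<close>

lemma abc_score_split:
  assumes "finite N" and "I \<subseteq> N"
  shows "abc_score s N A W = abc_score s (N - I) A W + abc_score s I A W"
  unfolding abc_score_def using sum.subset_diff[OF assms(2,1)] .

lemma abc_score_mono:
  assumes "scoring_function s" and "\<And>i. i \<in> I \<Longrightarrow> finite (A i)"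
    and "\<And>i. i \<in> I \<Longrightarrow> card (W' \<inter> A i) \<le> card (W \<inter> A i)"
  shows "abc_score s I A W' \<le> abc_score s I A W"
  unfolding abc_score_def
proof (rule sum_mono)
  fix i assume i: "i \<in> I"
  have "card (A i \<inter> W') \<le> card (A i \<inter> W)" "card (A i \<inter> W) \<le> card (A i)"
    using assms(3)[OF i] assms(2)[OF i] by (simp_all add: Int_commute card_mono)
  then show "s (card (A i \<inter> W')) (card (A i)) \<le> s (card (A i \<inter> W)) (card (A i))"
    using assms(1) unfolding scoring_function_def by blast
qed

lemma scoring_rule_exchange:
  assumes "finite N" and "I \<subseteq> N"
    and W: "W \<in> scoring_rule s C (N - I) A k"
    and W': "W' \<in> scoring_rule s C N A k"
    and group: "abc_score s I A W' \<le> abc_score s I A W"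
  shows "W \<in> scoring_rule s C N A k" and "W' \<in> scoring_rule s C (N - I) A k"
proof -
  have committees: "W \<in> committees C k" "W' \<in> committees C k"
    using W W' unfolding scoring_rule_def by auto
  have rest: "abc_score s (N - I) A W' \<le> abc_score s (N - I) A W"
    using W committees(2) unfolding scoring_rule_def by auto
  have overall: "abc_score s N A W \<le> abc_score s N A W'"
    using W' committees(1) unfolding scoring_rule_def by auto
  have split: "abc_score s N A V = abc_score s (N - I) A V + abc_score s I A V" for V
    using abc_score_split[OF assms(1,2)] .
  have "abc_score s N A W = abc_score s N A W'"
    using rest group overall split[of W] split[of W'] by linarith
  then show "W \<in> scoring_rule s C N A k"
    using W' committees(1) unfolding scoring_rule_def by auto
  have "abc_score s (N - I) A W' = abc_score s (N - I) A W"
    using rest group overall split[of W] split[of W'] by linarith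
  then show "W' \<in> scoring_rule s C (N - I) A k"
    using W committees(2) unfolding scoring_rule_def by auto
qed

theorem theorem1:
  fixes C :: "'c set" and N :: "'v set" and A :: "'v \<Rightarrow> 'c set"
    and s :: "nat \<Rightarrow> nat \<Rightarrow> rat" and k :: nat and I :: "'v set"
  assumes "finite C" and "card C > 1"
    and "scoring_function s"
    and "approval_profile C N A"
    and "1 \<le> k" and "k \<le> card C - 1"
    and "I \<subset> N"
  shows "\<not> ((\<forall>i\<in>I. kelly_weak (A i) (scoring_rule s C (N - I) A k) (scoring_rule s C N A k)) \<and>
             (\<exists>i\<in>I. kelly_strict (A i) (scoring_rule s C (N - I) A k) (scoring_rule s C N A k)))"
proof
  assume "(\<forall>i\<in>I. kelly_weak (A i) (scoring_rule s C (N - I) A k) (scoring_rule s C N A k)) \<and>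
          (\<exists>i\<in>I. kelly_strict (A i) (scoring_rule s C (N - I) A k) (scoring_rule s C N A k))"
  then have weak: "\<forall>i\<in>I. kelly_weak (A i) (scoring_rule s C (N - I) A k) (scoring_rule s C N A k)"
    and "\<exists>i\<in>I. kelly_strict (A i) (scoring_rule s C (N - I) A k) (scoring_rule s C N A k)"
    by blast+
  then obtain j W W' where j: "j \<in> I" and W: "W \<in> scoring_rule s C (N - I) A k"
    and W': "W' \<in> scoring_rule s C N A k" and strict: "strictly_prefers (A j) W W'"
    unfolding kelly_strict_def by blast
  have "finite N" and "I \<subseteq> N" and "\<And>i. i \<in> I \<Longrightarrow> finite (A i)"
    using assms(1,4,7) finite_subset unfolding approval_profile_def by blast+
  moreover have "\<And>i. i \<in> I \<Longrightarrow> card (W' \<inter> A i) \<le> card (W \<inter> A i)"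
    using weak W W' unfolding kelly_weak_def weakly_prefers_def by blast
  ultimately have "W' \<in> scoring_rule s C (N - I) A k" and "W \<in> scoring_rule s C N A k"
    using scoring_rule_exchange[OF _ _ W W' abc_score_mono[OF assms(3)]] by blast+
  then have "weakly_prefers (A j) W' W"
    using weak j unfolding kelly_weak_def by blast
  then show False
    using strict unfolding weakly_prefers_def strictly_prefers_def by simp
qed

end
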